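(* Let $h:X\to\mathbb{R}$ be convex and continuous and $f=g+h$. Let $x_0\in X$, let $\beta_i\ge 2\mathcal{L}$ for all $i\ge0$, and define the iterates $x_i=\mathrm{Prox}^h_{\beta_{i-1}}(\nabla G(x_{i-1},\omega_i),x_{i-1};x_0)$, $i=1,\dots,N$, and $\widehat x_N=\big[\sum_{i=1}^N\beta_{i-1}^{-1}\big]^{-1}\sum_{i=1}^N\beta_{i-1}^{-1}x_i$. Put $\zeta_i=\nabla G(x_{i-1},\omega_i)-\nabla g(x_{i-1})$ and $V=V_{x_0}$. Then there exist points $z_0=x_0,z_1,\dots,z_{N-1}\in X$, with $z_i$ a (measurable) function of $x_0,\zeta_1,\dots,\zeta_i$ only, such that for every realization and every $z\in X$, $$\Big[\sum_{i=1}^N\beta_{i-1}^{-1}\Big][f(\widehat x_N)-f(z)]\le\sum_{i=1}^N\beta_{i-1}^{-1}[f(x_i)-f(z)]\le V(x_0,z)-V(x_N,z)+\sum_{i=1}^N\Big[\frac{\langle\zeta_i,z-x_{i-1}\rangle}{\beta_{i-1}}+\frac{\|\zeta_i\|_*^2}{\beta_{i-1}^2}\Big]$$ $$\le 2V(x_0,z)+\sum_{i=1}^N\Big[\frac{\langle\zeta_i,z_{i-1}-x_{i-1}\rangle}{\beta_{i-1}}+\frac32\,\frac{\|\zeta_i\|_*^2}{\beta_{i-1}^2}\Big].$$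
   Context: $E$ is a finite-dimensional real Euclidean space with inner product $\langle\cdot,\cdot\rangle$; $\|\cdot\|$ is a norm on $E$ with conjugate norm $\|s\|_*=\max\{\langle s,x\rangle:\|x\|\le1\}$. $X\subset E$ is convex and closed with nonempty interior. $G:X\times\Omega\to\mathbb{R}$ with $G(\cdot,\omega)$ differentiable, $g(x)=\mathbb{E}\{G(x,\omega)\}$ finite, convex, differentiable on $X$ with $\|\nabla g(x)-\nabla g(x')\|_*\le\mathcal{L}\|x-x'\|$. $\omega_1,\omega_2,\dots$ are i.i.d. copies of $\omega$. $\vartheta:E\to\mathbb{R}$ is continuously differentiable, convex, with $\langle\nabla\vartheta(x)-\nabla\vartheta(x'),x-x'\rangle\ge\|x-x'\|^2$, and $\vartheta(x)\ge\vartheta(0)=0$. Bregman divergence: $V_{x_0}(x,z)=\vartheta(z-x_0)-\vartheta(x-x_0)-\langle\nabla\vartheta(x-x_0),z-x\rangle$. Composite proximal mapping: $\mathrm{Prox}^h_\beta(u,x;x_0)=\arg\min_{z\in X}\{\langle u,z\rangle+h(z)+\beta V_{x_0}(x,z)\}$. *)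

theory Defs
  imports "HOL-Probability.Probability"
begin

definition is_norm :: "('a::real_normed_vector \<Rightarrow> real) \<Rightarrow> bool" where
  "is_norm nrm \<longleftrightarrow> (\<forall>x. nrm x = 0 \<longleftrightarrow> x = 0) \<and> (\<forall>c x. nrm (c *\<^sub>R x) = \<bar>c\<bar> * nrm x)
     \<and> (\<forall>x y. nrm (x + y) \<le> nrm x + nrm y)"

definition dual_norm :: "('a::real_inner \<Rightarrow> real) \<Rightarrow> 'a \<Rightarrow> real" where
  "dual_norm nrm s = Sup {s \<bullet> x | x. nrm x \<le> 1}"

text \<open>Bregman divergence V_{x0}(x,z) of the d.g.f. vartheta with gradient dvt.\<close>
definition Vdiv :: "('a::real_inner \<Rightarrow> real) \<Rightarrow> ('a \<Rightarrow> 'a) \<Rightarrow> 'a \<Rightarrow> 'a \<Rightarrow> 'a \<Rightarrow> real" where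
  "Vdiv vt dvt x0 x z = vt (z - x0) - vt (x - x0) - dvt (x - x0) \<bullet> (z - x)"

definition prox :: "'a::real_inner set \<Rightarrow> ('a \<Rightarrow> real) \<Rightarrow> ('a \<Rightarrow> real) \<Rightarrow> ('a \<Rightarrow> 'a) \<Rightarrow> 'a
    \<Rightarrow> real \<Rightarrow> 'a \<Rightarrow> 'a \<Rightarrow> 'a" where
  "prox X h vt dvt x0 \<beta> u x =
     (SOME y. y \<in> X \<and> (\<forall>z\<in>X. u \<bullet> y + h y + \<beta> * Vdiv vt dvt x0 x y
                               \<le> u \<bullet> z + h z + \<beta> * Vdiv vt dvt x0 x z))"

primrec smd_iter :: "'a::real_inner set \<Rightarrow> ('a \<Rightarrow> real) \<Rightarrow> ('a \<Rightarrow> real) \<Rightarrow> ('a \<Rightarrow> 'a) \<Rightarrow> 'a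
    \<Rightarrow> (nat \<Rightarrow> real) \<Rightarrow> ('a \<Rightarrow> 'w \<Rightarrow> 'a) \<Rightarrow> (nat \<Rightarrow> 'w) \<Rightarrow> nat \<Rightarrow> 'a" where
  "smd_iter X h vt dvt x0 \<beta> dG \<omega> 0 = x0"
| "smd_iter X h vt dvt x0 \<beta> dG \<omega> (Suc i) =
     prox X h vt dvt x0 (\<beta> i) (dG (smd_iter X h vt dvt x0 \<beta> dG \<omega> i) (\<omega> (Suc i)))
       (smd_iter X h vt dvt x0 \<beta> dG \<omega> i)"

end

theory Submission
  imports Defs
begin

text \<open>Each step is a prox step for the linearisation of $g$ at $x_{i-1}$, perturbed by $\zeta_i$.
  Its first-order optimality condition, combined with the three-point identity of the Bregman
  divergence, the descent lemma for $g$ (where $\beta_{i-1} \ge 2\mathcal{L}$ absorbs the curvature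
  term) and the strong convexity of $V$, yields
  $\beta_{i-1}^{-1}[f(x_i)-f(z)] \le V(x_{i-1},z)-V(x_i,z)+\langle\zeta_i,z-x_{i-1}\rangle/\beta_{i-1}
   + \|\zeta_i\|_*^2/\beta_{i-1}^2$.
  Summing telescopes, and Jensen's inequality handles $\widehat x_N$.
  For the last bound one runs mirror descent on the noise alone, with
  $z_i = \mathrm{Prox}^0_1(-\zeta_i/\beta_{i-1}, z_{i-1}; x_0)$; the same argument gives
  $\langle\zeta_i,z-z_{i-1}\rangle/\beta_{i-1} \le V(z_{i-1},z)-V(z_i,z)+\|\zeta_i\|_*^2/(2\beta_{i-1}^2)$
  for every $z$, and splitting $z-x_{i-1} = (z-z_{i-1}) + (z_{i-1}-x_{i-1})$ gives the claim.
  The point $z_i$ is a measurable function of $\zeta_1,\dots,\zeta_i$ because the prox map is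
  Lipschitz in its data, $\nabla\vartheta$ being strongly monotone and continuous.\<close>

section \<open>Abstract norms and their duals\<close>

locale abstract_norm =
  fixes nrm :: "'a::euclidean_space \<Rightarrow> real"
  assumes is_norm: "is_norm nrm"
begin

lemma nrm_eq_0_iff: "nrm x = 0 \<longleftrightarrow> x = 0"
  and nrm_scaleR: "nrm (c *\<^sub>R x) = \<bar>c\<bar> * nrm x"
  and nrm_triangle: "nrm (x + y) \<le> nrm x + nrm y"
  using is_norm unfolding is_norm_def by blast+

lemma nrm_zero [simp]: "nrm 0 = 0"
  by (simp add: nrm_eq_0_iff)

lemma nrm_minus [simp]: "nrm (- x) = nrm x"
  using nrm_scaleR[of "-1" x] by simp

lemma nrm_minus_commute: "nrm (x - y) = nrm (y - x)"
  using nrm_minus[of "x - y"] by simp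

lemma nrm_nonneg [simp]: "0 \<le> nrm x"
  using nrm_triangle[of x "- x"] by simp

lemma convex_on_nrm: "convex_on UNIV nrm"
proof (rule convex_onI)
  fix t :: real and x y assume "0 < t" "t < 1"
  then show "nrm ((1 - t) *\<^sub>R x + t *\<^sub>R y) \<le> (1 - t) * nrm x + t * nrm y"
    using nrm_triangle[of "(1 - t) *\<^sub>R x" "t *\<^sub>R y"] by (simp add: nrm_scaleR)
qed simp

lemma norm_le_nrm: obtains c where "c > 0" "\<And>x. c * norm x \<le> nrm x"
proof -
  have cont: "continuous_on UNIV nrm"
    using convex_on_continuous[OF open_UNIV convex_on_nrm] .
  have "(SOME i. i \<in> Basis) \<in> sphere (0::'a) 1"
    using SOME_Basis by (simp add: norm_Basis)
  then have ne: "sphere (0::'a) 1 \<noteq> {}" by blast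
  obtain m where m: "m \<in> sphere 0 1" "\<And>y. y \<in> sphere 0 1 \<Longrightarrow> nrm m \<le> nrm y"
    using continuous_attains_inf[OF compact_sphere ne continuous_on_subset[OF cont]] by blast
  have "m \<noteq> 0" using m(1) by auto
  then have m_pos: "nrm m > 0"
    using nrm_nonneg[of m] nrm_eq_0_iff[of m] by linarith
  have "nrm m * norm x \<le> nrm x" for x
  proof (cases "x = 0")
    case False
    then have "nrm m \<le> nrm (inverse (norm x) *\<^sub>R x)"
      by (intro m(2)) (simp add: norm_inverse)
    with False show ?thesis by (simp add: nrm_scaleR field_simps)
  qed simp
  with m_pos that show thesis by blast
qed

lemma bdd_above_dual_norm_set: "bdd_above {s \<bullet> x | x. nrm x \<le> 1}"
proof -
  obtain c where c: "c > 0" "\<And>x. c * norm x \<le> nrm x" using norm_le_nrm by blast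
  have "s \<bullet> x \<le> norm s / c" if "nrm x \<le> 1" for x
  proof -
    have "norm x \<le> 1 / c" using c order_trans[OF c(2) that] by (simp add: field_simps)
    then have "norm s * norm x \<le> norm s / c"
      using mult_left_mono[of "norm x" "1 / c" "norm s"] by simp
    then show ?thesis using norm_cauchy_schwarz[of s x] by linarith
  qed
  then show ?thesis by (intro bdd_aboveI[of _ "norm s / c"]) blast
qed

lemma inner_le_dual_norm_unit: "nrm x \<le> 1 \<Longrightarrow> s \<bullet> x \<le> dual_norm nrm s"
  unfolding dual_norm_def by (rule cSup_upper[OF _ bdd_above_dual_norm_set]) auto

lemma inner_le_dual_norm: "s \<bullet> v \<le> dual_norm nrm s * nrm v"
proof (cases "v = 0")
  case False
  then have pos: "nrm v > 0" using nrm_nonneg[of v] nrm_eq_0_iff[of v] by linarith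
  then have "s \<bullet> (inverse (nrm v) *\<^sub>R v) \<le> dual_norm nrm s"
    by (intro inner_le_dual_norm_unit) (simp add: nrm_scaleR)
  with pos show ?thesis by (simp add: field_simps)
qed simp

end

section \<open>Calculus along segments\<close>

lemma le_if_deriv_nonneg_unit_interval:
  fixes f :: "real \<Rightarrow> real"
  assumes "\<And>t. t \<in> {0..1} \<Longrightarrow> (f has_real_derivative f' t) (at t within {0..1})"
    and "\<And>t. t \<in> {0..1} \<Longrightarrow> 0 \<le> f' t"
  shows "f 0 \<le> f 1"
proof -
  obtain t where "t \<in> {0..1}" "f 1 - f 0 = f' t * (1 - 0)"
    using mvt_very_simple[of 0 1 f "\<lambda>t h. f' t * h"] assms(1)
    unfolding has_field_derivative_def by force
  with assms(2)[of t] show ?thesis by simp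
qed

lemma deriv_nonneg_at_left_min:
  fixes \<psi> :: "real \<Rightarrow> real"
  assumes "(\<psi> has_real_derivative D) (at 0 within {0..1})"
    and "\<And>t. t \<in> {0..1} \<Longrightarrow> \<psi> 0 \<le> \<psi> t"
  shows "0 \<le> D"
proof (rule ccontr)
  assume "\<not> 0 \<le> D"
  then obtain d where d: "d > 0" "\<And>t. t > 0 \<Longrightarrow> t \<in> {0..1} \<Longrightarrow> t < d \<Longrightarrow> \<psi> t < \<psi> 0"
    using has_real_derivative_neg_dec_right[OF assms(1)] by force
  have "\<psi> (min (d / 2) 1) < \<psi> 0" using d by (intro d(2)) auto
  with assms(2)[of "min (d / 2) 1"] d(1) show False by auto
qed

lemma has_real_derivative_along_segment:
  fixes f :: "'a::real_inner \<Rightarrow> real"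
  assumes "convex S"
    and "\<And>y. y \<in> S \<Longrightarrow> (f has_derivative (\<lambda>v. df y \<bullet> v)) (at y within S)"
    and "x \<in> S" "y \<in> S" "t \<in> {0..1}"
  shows "((\<lambda>t. f (x + t *\<^sub>R (y - x))) has_real_derivative df (x + t *\<^sub>R (y - x)) \<bullet> (y - x))
           (at t within {0..1})"
proof -
  have segment: "(\<lambda>t. x + t *\<^sub>R (y - x)) ` {0..1} \<subseteq> S"
  proof
    fix w assume "w \<in> (\<lambda>t. x + t *\<^sub>R (y - x)) ` {0..1}"
    then obtain s where "s \<in> {0..1}" "w = (1 - s) *\<^sub>R x + s *\<^sub>R y"
      by (auto simp: algebra_simps)
    with assms(1,3,4) show "w \<in> S" unfolding convex_alt by auto
  qed
  have "((\<lambda>t. x + t *\<^sub>R (y - x)) has_derivative (\<lambda>h. h *\<^sub>R (y - x))) (at t within {0..1})"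
    by (auto intro!: derivative_eq_intros)
  from has_derivative_in_compose2[OF assms(2) segment _ this] assms(5) show ?thesis
    unfolding has_field_derivative_def
    by (auto elim!: has_derivative_eq_rhs simp: fun_eq_iff mult.commute)
qed

lemma convex_on_gradient_inequality:
  fixes g :: "'a::real_inner \<Rightarrow> real"
  assumes "convex X" "convex_on X g"
    and "\<And>x. x \<in> X \<Longrightarrow> (g has_derivative (\<lambda>v. dg x \<bullet> v)) (at x within X)"
    and "x \<in> X" "z \<in> X"
  shows "g x + dg x \<bullet> (z - x) \<le> g z"
proof -
  define \<psi> where "\<psi> t = t * (g z - g x) - g (x + t *\<^sub>R (z - x))" for t
  have "(\<psi> has_real_derivative (g z - g x) - dg x \<bullet> (z - x)) (at 0 within {0..1})"
    unfolding \<psi>_def[abs_def]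
    using has_real_derivative_along_segment[OF assms(1,3-5), of 0]
    by (auto intro!: derivative_eq_intros)
  moreover have "\<psi> 0 \<le> \<psi> t" if "t \<in> {0..1}" for t
    using convex_onD[OF assms(2), of t x z] that assms(4,5)
    by (simp add: \<psi>_def algebra_simps)
  ultimately have "0 \<le> (g z - g x) - dg x \<bullet> (z - x)" by (rule deriv_nonneg_at_left_min)
  then show ?thesis by simp
qed

context abstract_norm
begin

lemma smooth_upper_bound:
  fixes g :: "'a \<Rightarrow> real"
  assumes "convex X"
    and g_deriv: "\<And>x. x \<in> X \<Longrightarrow> (g has_derivative (\<lambda>v. dg x \<bullet> v)) (at x within X)"
    and dg_lipschitz: "\<And>x x'. x \<in> X \<Longrightarrow> x' \<in> X \<Longrightarrow> dual_norm nrm (dg x - dg x') \<le> L * nrm (x - x')"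
    and "x \<in> X" "y \<in> X"
  shows "g y \<le> g x + dg x \<bullet> (y - x) + L / 2 * (nrm (y - x))\<^sup>2"
proof -
  define n where "n = nrm (y - x)"
  define \<psi> where "\<psi> t = t * (dg x \<bullet> (y - x)) + t\<^sup>2 / 2 * L * n\<^sup>2 - g (x + t *\<^sub>R (y - x))" for t
  define D where "D t = dg x \<bullet> (y - x) + t * L * n\<^sup>2 - dg (x + t *\<^sub>R (y - x)) \<bullet> (y - x)" for t
  have "(\<psi> has_real_derivative D t) (at t within {0..1})" if "t \<in> {0..1}" for t
    unfolding \<psi>_def[abs_def] D_def
    using has_real_derivative_along_segment[OF assms(1) g_deriv assms(4,5) that]
    by (auto intro!: derivative_eq_intros simp: power2_eq_square)
  moreover have "0 \<le> D t" if t: "t \<in> {0..1}" for t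
  proof -
    let ?xt = "x + t *\<^sub>R (y - x)"
    have "?xt = (1 - t) *\<^sub>R x + t *\<^sub>R y" by (simp add: algebra_simps)
    then have xt: "?xt \<in> X" using assms(1,4,5) t unfolding convex_alt by auto
    have "(dg ?xt - dg x) \<bullet> (y - x) \<le> dual_norm nrm (dg ?xt - dg x) * n"
      unfolding n_def by (rule inner_le_dual_norm)
    also have "\<dots> \<le> L * nrm (?xt - x) * n"
      using dg_lipschitz[OF xt assms(4)] by (simp add: n_def mult_right_mono)
    also have "nrm (?xt - x) = t * n" using t by (simp add: nrm_scaleR n_def)
    finally show ?thesis by (simp add: D_def inner_diff_left power2_eq_square algebra_simps)
  qed
  ultimately have "\<psi> 0 \<le> \<psi> 1" by (rule le_if_deriv_nonneg_unit_interval)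
  then show ?thesis by (simp add: \<psi>_def n_def algebra_simps)
qed

end

section \<open>Bregman divergence and the prox map\<close>

lemma Vdiv_three_point:
  "(dvt (p - x0) - dvt (x - x0)) \<bullet> (z - p) = Vdiv vt dvt x0 x z - Vdiv vt dvt x0 p z - Vdiv vt dvt x0 x p"
  by (simp add: Vdiv_def inner_diff_left inner_diff_right algebra_simps)

locale distance_generating = abstract_norm nrm for nrm :: "'a::euclidean_space \<Rightarrow> real" +
  fixes vt :: "'a \<Rightarrow> real" and dvt :: "'a \<Rightarrow> 'a"
  assumes vt_deriv: "\<And>x. (vt has_derivative (\<lambda>v. dvt x \<bullet> v)) (at x)"
    and dvt_strongly_monotone: "\<And>x x'. (nrm (x - x'))\<^sup>2 \<le> (dvt x - dvt x') \<bullet> (x - x')"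
begin

lemma vt_deriv_within: "(vt has_derivative (\<lambda>v. dvt x \<bullet> v)) (at x within S)"
  using vt_deriv by (rule has_derivative_at_withinI)

lemma vt_has_real_derivative_along_segment:
  "t \<in> {0..1} \<Longrightarrow> ((\<lambda>t. vt (p + t *\<^sub>R (q - p))) has_real_derivative dvt (p + t *\<^sub>R (q - p)) \<bullet> (q - p))
     (at t within {0..1})"
  by (rule has_real_derivative_along_segment[OF convex_UNIV vt_deriv_within]) auto

lemma vt_strongly_convex: "(nrm (q - p))\<^sup>2 / 2 \<le> vt q - vt p - dvt p \<bullet> (q - p)"
proof -
  define n where "n = nrm (q - p)"
  define \<psi> where "\<psi> t = vt (p + t *\<^sub>R (q - p)) - t * (dvt p \<bullet> (q - p)) - t\<^sup>2 / 2 * n\<^sup>2" for t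
  define D where "D t = dvt (p + t *\<^sub>R (q - p)) \<bullet> (q - p) - dvt p \<bullet> (q - p) - t * n\<^sup>2" for t
  have "(\<psi> has_real_derivative D t) (at t within {0..1})" if "t \<in> {0..1}" for t
    unfolding \<psi>_def[abs_def] D_def using vt_has_real_derivative_along_segment[OF that]
    by (auto intro!: derivative_eq_intros simp: power2_eq_square)
  moreover have "0 \<le> D t" if t: "t \<in> {0..1}" for t
  proof (cases "t = 0")
    case False
    with t have t_pos: "t > 0" by simp
    have "(t * n)\<^sup>2 \<le> t * ((dvt (p + t *\<^sub>R (q - p)) - dvt p) \<bullet> (q - p))"
      using dvt_strongly_monotone[of "p + t *\<^sub>R (q - p)" p] t_pos by (simp add: nrm_scaleR n_def)
    then have "t * (t * n\<^sup>2) \<le> t * ((dvt (p + t *\<^sub>R (q - p)) - dvt p) \<bullet> (q - p))"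
      by (simp add: power2_eq_square mult_ac)
    with t_pos show ?thesis by (simp add: D_def inner_diff_left)
  qed (simp add: D_def)
  ultimately have "\<psi> 0 \<le> \<psi> 1" by (rule le_if_deriv_nonneg_unit_interval)
  then show ?thesis by (simp add: \<psi>_def n_def)
qed

lemma Vdiv_lower_bound: "(nrm (y - x))\<^sup>2 / 2 \<le> Vdiv vt dvt x0 x y"
  using vt_strongly_convex[of "y - x0" "x - x0"] by (simp add: Vdiv_def)

lemma Vdiv_nonneg: "0 \<le> Vdiv vt dvt x0 x y"
  using Vdiv_lower_bound[of y x x0] zero_le_power2[of "nrm (y - x)"] by linarith

lemma Vdiv_has_real_derivative_along_segment:
  "((\<lambda>t. Vdiv vt dvt x0 x (p + t *\<^sub>R (z - p))) has_real_derivative (dvt (p - x0) - dvt (x - x0)) \<bullet> (z - p))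
     (at 0 within {0..1})"
proof -
  have "(\<lambda>t. Vdiv vt dvt x0 x (p + t *\<^sub>R (z - p)))
      = (\<lambda>t. vt ((p - x0) + t *\<^sub>R ((z - x0) - (p - x0))) - vt (x - x0)
               - dvt (x - x0) \<bullet> (p - x) - t * (dvt (x - x0) \<bullet> (z - p)))"
    by (simp add: Vdiv_def fun_eq_iff inner_diff_right algebra_simps)
  then show ?thesis
    using vt_has_real_derivative_along_segment[of 0 "p - x0" "z - x0"]
    by (auto intro!: derivative_eq_intros simp: inner_diff_left)
qed

end

lemma convex_on_linear_growth_below:
  fixes h :: "'a::euclidean_space \<Rightarrow> real"
  assumes "convex X" "closed X" "q \<in> X" "convex_on X h" "continuous_on X h"
  obtains K where "0 \<le> K" "\<And>y. y \<in> X \<Longrightarrow> 1 \<le> norm (y - q) \<Longrightarrow> h q - K * norm (y - q) \<le> h y"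
proof -
  have "compact (X \<inter> cball q 1)" using closed_Int_compact[OF assms(2) compact_cball] .
  moreover have "X \<inter> cball q 1 \<noteq> {}" using assms(3) by auto
  ultimately obtain m where m: "m \<in> X \<inter> cball q 1" "\<And>w. w \<in> X \<inter> cball q 1 \<Longrightarrow> h m \<le> h w"
    using continuous_attains_inf[OF _ _ continuous_on_subset[OF assms(5) Int_lower1]] by meson
  define K where "K = h q - h m"
  have "h q - K * norm (y - q) \<le> h y" if y: "y \<in> X" "1 \<le> norm (y - q)" for y
  proof -
    define r where "r = norm (y - q)"
    define q' where "q' = (1 - 1 / r) *\<^sub>R q + (1 / r) *\<^sub>R y"
    have "1 \<le> r" using y by (simp add: r_def)
    then have r: "1 \<le> r" "0 \<le> 1 / r" "1 / r \<le> 1" by auto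
    have "q' \<in> X" using assms(1,3) y(1) r unfolding q'_def convex_alt by auto
    moreover have "q' - q = (1 / r) *\<^sub>R (y - q)" by (simp add: q'_def algebra_simps)
    then have "norm (q' - q) = 1" using r(1) by (simp add: r_def[symmetric])
    then have "q' \<in> cball q 1" by (simp add: dist_norm norm_minus_commute)
    ultimately have "h m \<le> h q'" using m(2) by blast
    also have "h q' \<le> (1 - 1 / r) * h q + (1 / r) * h y"
      using convex_onD[OF assms(4), of "1 / r" q y] r assms(3) y(1) unfolding q'_def by simp
    finally have "r * h m \<le> r * ((1 - 1 / r) * h q + (1 / r) * h y)" using r by simp
    also have "\<dots> = (r - 1) * h q + h y" using r by (simp add: field_simps)
    finally have "r * h m \<le> (r - 1) * h q + h y" .
    moreover have "h q - K * r = h q - r * h q + r * h m" by (simp add: K_def algebra_simps)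
    ultimately show ?thesis by (simp add: r_def[symmetric] algebra_simps)
  qed
  moreover have "0 \<le> K" using m(2)[of q] assms(3) by (simp add: K_def)
  ultimately show thesis using that by blast
qed

lemma continuous_attains_inf_coercive:
  fixes F :: "'a::heine_borel \<Rightarrow> real"
  assumes "closed X" "continuous_on X F" "q \<in> X" "0 \<le> R"
    and "\<And>y. y \<in> X \<Longrightarrow> R < dist q y \<Longrightarrow> F q < F y"
  obtains p where "p \<in> X" "\<And>z. z \<in> X \<Longrightarrow> F p \<le> F z"
proof -
  have "compact (X \<inter> cball q R)" using closed_Int_compact[OF assms(1) compact_cball] .
  moreover have "X \<inter> cball q R \<noteq> {}" using assms(3,4) by auto
  ultimately obtain p where p: "p \<in> X \<inter> cball q R" "\<And>z. z \<in> X \<inter> cball q R \<Longrightarrow> F p \<le> F z"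
    using continuous_attains_inf[OF _ _ continuous_on_subset[OF assms(2) Int_lower1]] by meson
  have "F p \<le> F z" if "z \<in> X" for z
  proof (cases "z \<in> cball q R")
    case False
    then have "F q < F z" using assms(5) that by (simp add: dist_commute)
    moreover have "F p \<le> F q" using p(2) assms(3,4) by simp
    ultimately show ?thesis by simp
  qed (use p that in blast)
  with p(1) that show thesis by blast
qed

lemma quadratic_dominates_affine:
  fixes A B C d s :: real
  assumes "0 < A" "0 \<le> B" "0 \<le> C" "0 \<le> d" "1 + (B + C + B * d) / A < s"
  shows "B * (s + d) + C < A * s\<^sup>2"
proof -
  have "0 \<le> (B + C + B * d) / A" using assms(1-4) by simp
  then have s: "1 < s" using assms(5) by linarith
  have "A + (B + C + B * d) < A * s" using assms(1,5) by (simp add: field_simps)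
  then have "(A + (B + C + B * d)) * s < A * s\<^sup>2" using s by (simp add: power2_eq_square)
  moreover have "B * (s + d) + C \<le> (A + (B + C + B * d)) * s"
  proof -
    have "C \<le> C * s" "B * d \<le> B * d * s" "0 \<le> A * s"
      using s assms(1-4) mult_left_mono[of 1 s C] mult_left_mono[of 1 s "B * d"] by simp_all
    then show ?thesis by (simp add: algebra_simps)
  qed
  ultimately show ?thesis by linarith
qed

locale prox_setup = distance_generating nrm vt dvt
  for nrm :: "'a::euclidean_space \<Rightarrow> real" and vt dvt +
  fixes X :: "'a set" and x0 :: 'a
  assumes convex_X: "convex X" and closed_X: "closed X" and x0_in_X: "x0 \<in> X"
begin

abbreviation V :: "'a \<Rightarrow> 'a \<Rightarrow> real" where
  "V \<equiv> Vdiv vt dvt x0"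

abbreviation Prox :: "('a \<Rightarrow> real) \<Rightarrow> real \<Rightarrow> 'a \<Rightarrow> 'a \<Rightarrow> 'a" where
  "Prox h \<equiv> prox X h vt dvt x0"

lemma prox_minimizer_exists:
  assumes h: "convex_on X h" "continuous_on X h" and "0 < \<beta>"
  obtains p where "p \<in> X" "\<And>z. z \<in> X \<Longrightarrow> u \<bullet> p + h p + \<beta> * V x p \<le> u \<bullet> z + h z + \<beta> * V x z"
proof -
  define F where "F y = u \<bullet> y + h y + \<beta> * V x y" for y
  have vt_cont: "continuous_on UNIV vt"
    using vt_deriv has_derivative_continuous continuous_at_imp_continuous_on by blast
  have F_cont: "continuous_on X F"
    unfolding F_def Vdiv_def by (intro continuous_intros h(2) continuous_on_compose2[OF vt_cont]) auto
  obtain c where c: "0 < c" "\<And>x. c * norm x \<le> nrm x" using norm_le_nrm by blast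
  obtain K where K: "0 \<le> K" "\<And>y. y \<in> X \<Longrightarrow> 1 \<le> norm (y - x0) \<Longrightarrow> h x0 - K * norm (y - x0) \<le> h y"
    using convex_on_linear_growth_below[OF convex_X closed_X x0_in_X h] by blast
  define A where "A = \<beta> * c\<^sup>2 / 2"
  define B where "B = norm u + K"
  define C where "C = \<beta> * V x x0"
  define d where "d = norm (x0 - x)"
  define R where "R = 1 + d + (B + C + B * d) / A"
  have A: "0 < A" using \<open>0 < \<beta>\<close> c by (simp add: A_def)
  have BCd: "0 \<le> B" "0 \<le> C" "0 \<le> d"
    using K \<open>0 < \<beta>\<close> Vdiv_nonneg by (simp_all add: B_def C_def d_def)
  have R: "1 + d \<le> R" unfolding R_def using A BCd by simp
  have coercive: "F x0 < F y" if y: "y \<in> X" "R < dist x0 y" for y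
  proof -
    define r where "r = norm (y - x0)"
    have rd: "1 + (B + C + B * d) / A < r - d" using y by (simp add: r_def R_def dist_norm norm_minus_commute)
    have "h x0 - K * r \<le> h y" using K(2)[OF y(1)] y R BCd(3) by (simp add: r_def dist_norm norm_minus_commute)
    moreover have "u \<bullet> x0 - norm u * r \<le> u \<bullet> y"
      using norm_cauchy_schwarz[of u "x0 - y"] by (simp add: r_def norm_minus_commute inner_diff_right)
    moreover have "A * (r - d)\<^sup>2 \<le> \<beta> * V x y"
    proof -
      have "r - d \<le> norm (y - x)"
        using norm_triangle_ineq4[of "y - x" "x0 - x"] by (simp add: r_def d_def)
      moreover have "0 \<le> (B + C + B * d) / A" using A BCd by simp
      then have rd0: "0 \<le> r - d" using rd by linarith
      ultimately have "c * (r - d) \<le> nrm (y - x)"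
        using c mult_left_mono[of "r - d" "norm (y - x)" c] by (meson less_imp_le order_trans)
      then have "(c * (r - d))\<^sup>2 \<le> (nrm (y - x))\<^sup>2"
        using c(1) rd0 by (intro power_mono) auto
      then have "(c * (r - d))\<^sup>2 / 2 \<le> V x y"
        using Vdiv_lower_bound[of y x x0] by linarith
      with \<open>0 < \<beta>\<close> show ?thesis by (simp add: A_def power_mult_distrib mult_left_mono)
    qed
    moreover have "B * ((r - d) + d) + C < A * (r - d)\<^sup>2"
      by (rule quadratic_dominates_affine[OF A BCd rd])
    ultimately show ?thesis unfolding F_def B_def C_def by (simp add: algebra_simps)
  qed
  have "0 \<le> R" using R BCd(3) by linarith
  obtain p where "p \<in> X" "\<And>z. z \<in> X \<Longrightarrow> F p \<le> F z"
    using continuous_attains_inf_coercive[OF closed_X F_cont x0_in_X \<open>0 \<le> R\<close> coercive] by blast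
  then show thesis by (intro that) (auto simp: F_def)
qed

lemma prox_minimal:
  assumes "convex_on X h" "continuous_on X h" "0 < \<beta>"
  shows "Prox h \<beta> u x \<in> X"
    and "z \<in> X \<Longrightarrow> u \<bullet> Prox h \<beta> u x + h (Prox h \<beta> u x) + \<beta> * V x (Prox h \<beta> u x)
                     \<le> u \<bullet> z + h z + \<beta> * V x z"
proof -
  obtain p where "p \<in> X" "\<And>z. z \<in> X \<Longrightarrow> u \<bullet> p + h p + \<beta> * V x p \<le> u \<bullet> z + h z + \<beta> * V x z"
    using prox_minimizer_exists[OF assms, where u = u and x = x] by blast
  then have "\<exists>p. p \<in> X \<and> (\<forall>z\<in>X. u \<bullet> p + h p + \<beta> * V x p \<le> u \<bullet> z + h z + \<beta> * V x z)"
    by blast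
  then have "Prox h \<beta> u x \<in> X \<and> (\<forall>z\<in>X. u \<bullet> Prox h \<beta> u x + h (Prox h \<beta> u x) + \<beta> * V x (Prox h \<beta> u x)
      \<le> u \<bullet> z + h z + \<beta> * V x z)"
    unfolding prox_def by (rule someI_ex)
  then show "Prox h \<beta> u x \<in> X"
    and "z \<in> X \<Longrightarrow> u \<bullet> Prox h \<beta> u x + h (Prox h \<beta> u x) + \<beta> * V x (Prox h \<beta> u x)
                     \<le> u \<bullet> z + h z + \<beta> * V x z" by blast+
qed

text \<open>The first-order optimality condition of the prox problem, rewritten with the three-point identity.\<close>
lemma minimizer_three_point_inequality:
  assumes "convex_on X h" "0 < \<beta>" "p \<in> X" "z \<in> X"
    and min: "\<And>y. y \<in> X \<Longrightarrow> u \<bullet> p + h p + \<beta> * V x p \<le> u \<bullet> y + h y + \<beta> * V x y"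
  shows "u \<bullet> (p - z) + h p - h z \<le> \<beta> * (V x z - V p z - V x p)"
proof -
  define \<psi> where "\<psi> t = u \<bullet> p + t * (u \<bullet> (z - p) + (h z - h p)) + \<beta> * V x (p + t *\<^sub>R (z - p))" for t
  have "(\<psi> has_real_derivative u \<bullet> (z - p) + (h z - h p) + \<beta> * (V x z - V p z - V x p))
      (at 0 within {0..1})"
    unfolding \<psi>_def[abs_def] Vdiv_three_point[symmetric]
    using Vdiv_has_real_derivative_along_segment[of x0 x p z]
    by (auto intro!: derivative_eq_intros)
  moreover have "\<psi> 0 \<le> \<psi> t" if t: "t \<in> {0..1}" for t
  proof -
    have pt: "p + t *\<^sub>R (z - p) = (1 - t) *\<^sub>R p + t *\<^sub>R z" by (simp add: algebra_simps)
    then have "p + t *\<^sub>R (z - p) \<in> X" using convex_X assms(3,4) t unfolding convex_alt by auto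
    moreover have "h (p + t *\<^sub>R (z - p)) \<le> h p + t * (h z - h p)"
      using convex_onD[OF assms(1), of t p z] t assms(3,4) pt by (simp add: algebra_simps)
    ultimately show ?thesis
      using min[of "p + t *\<^sub>R (z - p)"] by (simp add: \<psi>_def inner_add_right algebra_simps)
  qed
  ultimately have "0 \<le> u \<bullet> (z - p) + (h z - h p) + \<beta> * (V x z - V p z - V x p)"
    by (rule deriv_nonneg_at_left_min)
  then show ?thesis using inner_diff_right[of u p z] inner_diff_right[of u z p] by linarith
qed

lemma prox_three_point_inequality:
  assumes "convex_on X h" "continuous_on X h" "0 < \<beta>" "z \<in> X"
  shows "u \<bullet> (Prox h \<beta> u x - z) + h (Prox h \<beta> u x) - h z
           \<le> \<beta> * (V x z - V (Prox h \<beta> u x) z - V x (Prox h \<beta> u x))"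
  using minimizer_three_point_inequality[OF assms(1,3) prox_minimal(1)[OF assms(1-3)] assms(4)]
    prox_minimal(2)[OF assms(1-3)] by blast

lemma prox_lipschitz:
  assumes h: "convex_on X h" "continuous_on X h"
    and c: "0 < c" "\<And>x. c * norm x \<le> nrm x"
  shows "c\<^sup>2 * norm (Prox h 1 u' x' - Prox h 1 u x) \<le> norm (u - u') + norm (dvt (x - x0) - dvt (x' - x0))"
proof -
  define p where "p = Prox h 1 u x"
  define p' where "p' = Prox h 1 u' x'"
  define a where "a w = dvt (w - x0)" for w
  have p_in: "p \<in> X" "p' \<in> X" unfolding p_def p'_def using prox_minimal(1)[OF h] by simp_all
  have "u \<bullet> (p - p') + h p - h p' \<le> (a p - a x) \<bullet> (p' - p)"
    using prox_three_point_inequality[OF h _ p_in(2), of 1 u x]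
    by (simp add: p_def a_def Vdiv_three_point[where vt = vt])
  moreover have "u' \<bullet> (p' - p) + h p' - h p \<le> (a p' - a x') \<bullet> (p - p')"
    using prox_three_point_inequality[OF h _ p_in(1), of 1 u' x']
    by (simp add: p'_def a_def Vdiv_three_point[where vt = vt])
  ultimately have "(a p' - a p) \<bullet> (p' - p) \<le> (a x' - a x + (u - u')) \<bullet> (p' - p)"
    by (simp add: inner_diff_left inner_diff_right inner_add_left algebra_simps)
  also have "\<dots> \<le> norm (a x' - a x + (u - u')) * norm (p' - p)"
    by (rule norm_cauchy_schwarz)
  also have "\<dots> \<le> (norm (u - u') + norm (a x - a x')) * norm (p' - p)"
    using norm_triangle_ineq[of "a x' - a x" "u - u'"]
    by (intro mult_right_mono) (simp_all add: norm_minus_commute add.commute)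
  finally have upper: "(a p' - a p) \<bullet> (p' - p) \<le> (norm (u - u') + norm (a x - a x')) * norm (p' - p)" .
  have "(c * norm (p' - p))\<^sup>2 \<le> (nrm (p' - p))\<^sup>2"
    using c by (intro power_mono) auto
  also have "\<dots> \<le> (a p' - a p) \<bullet> (p' - p)"
    using dvt_strongly_monotone[of "p' - x0" "p - x0"] by (simp add: a_def)
  finally have "c\<^sup>2 * norm (p' - p) * norm (p' - p) \<le> (norm (u - u') + norm (a x - a x')) * norm (p' - p)"
    using upper by (simp add: power2_eq_square algebra_simps)
  then have "c\<^sup>2 * norm (p' - p) \<le> norm (u - u') + norm (a x - a x')"
    by (cases "p' = p") simp_all
  then show ?thesis by (simp add: p_def p'_def a_def)
qed

lemma prox_continuous:
  assumes h: "convex_on X h" "continuous_on X h" and dvt_cont: "continuous_on UNIV dvt"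
  shows "continuous_on UNIV (\<lambda>(u, x). Prox h 1 u x)"
proof -
  obtain c where c: "0 < c" "\<And>x. c * norm x \<le> nrm x" using norm_le_nrm by blast
  have "isCont (\<lambda>(u, x). Prox h 1 u x) (u0, x0')" for u0 x0'
  proof -
    define e where "e w = (norm (u0 - fst w) + norm (dvt (x0' - x0) - dvt (snd w - x0))) / c\<^sup>2" for w
    have "isCont dvt y" for y using dvt_cont continuous_on_eq_continuous_at by blast
    then have "isCont e (u0, x0')"
      unfolding e_def
      by (intro continuous_intros continuous_at_compose[OF _ \<open>isCont dvt _\<close>, unfolded o_def])
        (use c in auto)
    then have e_lim: "(e \<longlongrightarrow> 0) (at (u0, x0'))" by (simp add: isCont_def e_def)
    have "norm ((\<lambda>(u, x). Prox h 1 u x) w - Prox h 1 u0 x0') \<le> e w" for w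
      using prox_lipschitz[OF h c, of "fst w" "snd w" u0 x0'] c(1)
      by (simp add: e_def case_prod_beta field_simps)
    then have "((\<lambda>w. (\<lambda>(u, x). Prox h 1 u x) w - Prox h 1 u0 x0') \<longlongrightarrow> 0) (at (u0, x0'))"
      by (intro Lim_null_comparison[OF _ e_lim]) auto
    then show ?thesis unfolding isCont_def by (simp add: LIM_zero_iff)
  qed
  then show ?thesis by (auto intro: continuous_at_imp_continuous_on)
qed

end

section \<open>Ghost iterates\<close>

text \<open>The auxiliary points $z_i$ of the theorem: mirror descent for the linear losses
  $-\langle\zeta_i,\cdot\rangle$ with steps $\beta_{i-1}^{-1}$, started at $x_0$.\<close>
primrec ghost_iter :: "'a::real_inner set \<Rightarrow> ('a \<Rightarrow> real) \<Rightarrow> ('a \<Rightarrow> 'a) \<Rightarrow> 'a \<Rightarrow> (nat \<Rightarrow> real)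
    \<Rightarrow> (nat \<Rightarrow> 'a) \<Rightarrow> nat \<Rightarrow> 'a" where
  "ghost_iter X vt dvt x0 \<beta> \<zeta> 0 = x0"
| "ghost_iter X vt dvt x0 \<beta> \<zeta> (Suc i) =
     prox X (\<lambda>_. 0) vt dvt x0 1 (- (inverse (\<beta> i) *\<^sub>R \<zeta> (Suc i))) (ghost_iter X vt dvt x0 \<beta> \<zeta> i)"

lemma ghost_iter_cong:
  "(\<And>j. j \<in> {1..i} \<Longrightarrow> \<zeta> j = \<zeta>' j) \<Longrightarrow> ghost_iter X vt dvt x0 \<beta> \<zeta> i = ghost_iter X vt dvt x0 \<beta> \<zeta>' i"
  by (induction i) auto

lemma ghost_iter_restrict: "ghost_iter X vt dvt x0 \<beta> \<zeta> i = ghost_iter X vt dvt x0 \<beta> (restrict \<zeta> {1..i}) i"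
  by (rule ghost_iter_cong) simp

context prox_setup
begin

lemma ghost_iter_in_X: "ghost_iter X vt dvt x0 \<beta> \<zeta> i \<in> X"
  using x0_in_X prox_minimal(1)[of "\<lambda>_. 0" 1] convex_X by (cases i) (simp_all add: convex_on_const)

lemma ghost_iter_measurable:
  assumes "continuous_on UNIV dvt" "{1..i} \<subseteq> I"
  shows "(\<lambda>\<zeta>. ghost_iter X vt dvt x0 \<beta> \<zeta> i) \<in> borel_measurable (PiM I (\<lambda>_. borel))"
  using assms(2)
proof (induction i)
  case (Suc i)
  have "Suc i \<in> I" using Suc.prems by auto
  then have "(\<lambda>\<zeta>. \<zeta> (Suc i)) \<in> borel_measurable (PiM I (\<lambda>_. borel))"
    using measurable_component_singleton[of "Suc i" I "\<lambda>_. borel"] by simp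
  moreover have "{1..i} \<subseteq> I" using Suc.prems by auto
  then have "(\<lambda>\<zeta>. ghost_iter X vt dvt x0 \<beta> \<zeta> i) \<in> borel_measurable (PiM I (\<lambda>_. borel))"
    by (rule Suc.IH)
  moreover have "continuous_on UNIV (\<lambda>w. Prox (\<lambda>_. 0) 1 (- (inverse (\<beta> i) *\<^sub>R fst w)) (snd w))"
  proof -
    have "continuous_on UNIV (\<lambda>(u, x). Prox (\<lambda>_. 0) 1 u x)"
      using prox_continuous[of "\<lambda>_. 0"] convex_X assms(1) by (simp add: convex_on_const)
    moreover have "continuous_on UNIV (\<lambda>w::'a \<times> 'a. (- (inverse (\<beta> i) *\<^sub>R fst w), snd w))"
      by (intro continuous_intros)
    ultimately show ?thesis
      using continuous_on_compose[of UNIV "\<lambda>w::'a \<times> 'a. (- (inverse (\<beta> i) *\<^sub>R fst w), snd w)"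
          "\<lambda>(u, x). Prox (\<lambda>_. 0) 1 u x"] continuous_on_subset by (force simp: o_def)
  qed
  ultimately show ?case using borel_measurable_continuous_Pair by simp
qed simp

end

section \<open>Regret of stochastic mirror descent\<close>

lemma product_le_sum_squares:
  fixes a b k :: real
  assumes "0 < k"
  shows "a * b \<le> a\<^sup>2 / (2 * k) + k * b\<^sup>2 / 2"
proof -
  have "0 \<le> (a - k * b)\<^sup>2 / (2 * k)" using assms by simp
  also have "\<dots> = a\<^sup>2 / (2 * k) + k * b\<^sup>2 / 2 - a * b"
    using assms by (simp add: power2_eq_square field_simps)
  finally show ?thesis by simp
qed

lemma sum_telescope_atLeast1:
  fixes a :: "nat \<Rightarrow> 'a::ab_group_add"
  shows "(\<Sum>i=1..N. a (i - 1) - a i) = a 0 - a N"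
  by (induction N) simp_all

lemma convex_on_weighted_mean_gap:
  fixes f :: "'a::real_vector \<Rightarrow> real"
  assumes "convex_on X f" "finite I" "I \<noteq> {}" "\<And>i. i \<in> I \<Longrightarrow> 0 < w i" "\<And>i. i \<in> I \<Longrightarrow> x i \<in> X"
  shows "(\<Sum>i\<in>I. w i) * (f (inverse (\<Sum>i\<in>I. w i) *\<^sub>R (\<Sum>i\<in>I. w i *\<^sub>R x i)) - f z)
           \<le> (\<Sum>i\<in>I. w i * (f (x i) - f z))"
proof -
  define S where "S = (\<Sum>i\<in>I. w i)"
  have S: "0 < S" unfolding S_def using assms(2-4) by (intro sum_pos) auto
  have "f (\<Sum>i\<in>I. (inverse S * w i) *\<^sub>R x i) \<le> (\<Sum>i\<in>I. (inverse S * w i) * f (x i))"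
    using S assms(4,5)
    by (intro convex_on_sum[OF assms(2,3,1)]) (auto simp: S_def sum_distrib_left[symmetric] less_imp_le)
  then have "f (inverse S *\<^sub>R (\<Sum>i\<in>I. w i *\<^sub>R x i)) \<le> inverse S * (\<Sum>i\<in>I. w i * f (x i))"
    by (simp add: scaleR_sum_right sum_distrib_left mult.assoc)
  then have "S * f (inverse S *\<^sub>R (\<Sum>i\<in>I. w i *\<^sub>R x i)) \<le> S * (inverse S * (\<Sum>i\<in>I. w i * f (x i)))"
    using S by (intro mult_left_mono) auto
  also have "\<dots> = (\<Sum>i\<in>I. w i * f (x i))" using S by simp
  finally have "S * f (inverse S *\<^sub>R (\<Sum>i\<in>I. w i *\<^sub>R x i)) \<le> (\<Sum>i\<in>I. w i * f (x i))" .
  then show ?thesis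
    by (simp add: S_def[symmetric] right_diff_distrib sum_subtractf sum_distrib_right[symmetric])
qed

context prox_setup
begin

lemma smd_step_bound:
  assumes g: "convex_on X g" "\<And>x. x \<in> X \<Longrightarrow> (g has_derivative (\<lambda>v. dg x \<bullet> v)) (at x within X)"
      "\<And>x x'. x \<in> X \<Longrightarrow> x' \<in> X \<Longrightarrow> dual_norm nrm (dg x - dg x') \<le> L * nrm (x - x')"
    and h: "convex_on X h" "continuous_on X h"
    and b: "0 < b" "2 * L \<le> b"
    and "y \<in> X" "z \<in> X"
    and y'_def: "y' = Prox h b (dg y + \<zeta>) y"
  shows "inverse b * (g y' + h y' - (g z + h z))
           \<le> V y z - V y' z + (\<zeta> \<bullet> (z - y)) / b + (dual_norm nrm \<zeta>)\<^sup>2 / b\<^sup>2"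
proof -
  define n where "n = nrm (y' - y)"
  define D where "D = dual_norm nrm \<zeta>"
  have y': "y' \<in> X" unfolding y'_def by (rule prox_minimal(1)[OF h b(1)])
  have "g y' - g z \<le> dg y \<bullet> (y' - z) + L / 2 * n\<^sup>2"
    using smooth_upper_bound[OF convex_X g(2,3) \<open>y \<in> X\<close> y']
      convex_on_gradient_inequality[OF convex_X g(1,2) \<open>y \<in> X\<close> \<open>z \<in> X\<close>]
    by (simp add: n_def inner_diff_right)
  moreover have "(dg y + \<zeta>) \<bullet> (y' - z) + h y' - h z \<le> b * (V y z - V y' z - V y y')"
    unfolding y'_def by (rule prox_three_point_inequality[OF h b(1) \<open>z \<in> X\<close>])
  moreover have "b * (n\<^sup>2 / 2) \<le> b * V y y'"
    using Vdiv_lower_bound[of y' y x0] b(1) by (simp add: n_def)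
  moreover have "\<zeta> \<bullet> (y - y') \<le> D * n"
    using inner_le_dual_norm[of \<zeta> "y - y'"] by (simp add: D_def n_def nrm_minus_commute)
  moreover have "L / 2 * n\<^sup>2 \<le> b / 4 * n\<^sup>2" using b by (intro mult_right_mono) auto
  moreover have "D * n \<le> D\<^sup>2 / b + b / 4 * n\<^sup>2"
    using product_le_sum_squares[of "b / 2" D n] b(1) by simp
  ultimately have "g y' + h y' - (g z + h z) \<le> b * (V y z - V y' z) + \<zeta> \<bullet> (z - y) + D\<^sup>2 / b"
    by (simp add: inner_add_left inner_diff_right algebra_simps)
  then have "inverse b * (g y' + h y' - (g z + h z)) \<le> inverse b * (b * (V y z - V y' z) + \<zeta> \<bullet> (z - y) + D\<^sup>2 / b)"
    using b(1) by (intro mult_left_mono) auto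
  also have "\<dots> = V y z - V y' z + (\<zeta> \<bullet> (z - y)) / b + D\<^sup>2 / b\<^sup>2"
    using b(1) by (simp add: field_simps power2_eq_square)
  finally show ?thesis by (simp add: D_def)
qed

lemma ghost_step_bound:
  assumes "0 < b" "z \<in> X"
    and y'_def: "y' = Prox (\<lambda>_. 0) 1 (- (inverse b *\<^sub>R \<zeta>)) y"
  shows "(\<zeta> \<bullet> (z - y)) / b \<le> V y z - V y' z + (dual_norm nrm \<zeta>)\<^sup>2 / (2 * b\<^sup>2)"
proof -
  define e where "e = nrm (y' - y)"
  define D where "D = dual_norm nrm \<zeta>"
  have "inverse b * (\<zeta> \<bullet> (z - y')) \<le> V y z - V y' z - V y y'"
    using prox_three_point_inequality[of "\<lambda>_. 0" 1 z "- (inverse b *\<^sub>R \<zeta>)" y] convex_X assms(2)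
    by (simp add: y'_def convex_on_const inner_diff_right right_diff_distrib)
  then have "(\<zeta> \<bullet> (z - y')) / b \<le> V y z - V y' z - V y y'" by (simp add: divide_inverse mult.commute)
  moreover have "e\<^sup>2 / 2 \<le> V y y'" using Vdiv_lower_bound[of y' y x0] by (simp add: e_def)
  moreover have "(\<zeta> \<bullet> (y' - y)) / b \<le> D / b * e"
    using inner_le_dual_norm[of \<zeta> "y' - y"] assms(1) by (simp add: D_def e_def divide_right_mono)
  moreover have "D / b * e \<le> (D / b)\<^sup>2 / 2 + e\<^sup>2 / 2"
    using product_le_sum_squares[of 1 "D / b" e] by simp
  moreover have "(\<zeta> \<bullet> (z - y)) / b = (\<zeta> \<bullet> (z - y')) / b + (\<zeta> \<bullet> (y' - y)) / b"
    by (simp add: inner_diff_right diff_divide_distrib)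
  ultimately have "(\<zeta> \<bullet> (z - y)) / b \<le> V y z - V y' z + (D / b)\<^sup>2 / 2" by linarith
  then show ?thesis by (simp add: D_def power_divide)
qed

lemma smd_iterates_in_X:
  assumes h: "convex_on X h" "continuous_on X h" and "\<And>i. 0 < \<beta> i"
    and "x 0 = x0" "\<And>k. x (Suc k) = Prox h (\<beta> k) (u k) (x k)"
  shows "x k \<in> X"
  using prox_minimal(1)[OF h assms(3)] assms(4,5) x0_in_X by (cases k) simp_all

lemma smd_regret_bound:
  assumes g: "convex_on X g" "\<And>x. x \<in> X \<Longrightarrow> (g has_derivative (\<lambda>v. dg x \<bullet> v)) (at x within X)"
      "\<And>x x'. x \<in> X \<Longrightarrow> x' \<in> X \<Longrightarrow> dual_norm nrm (dg x - dg x') \<le> L * nrm (x - x')"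
    and h: "convex_on X h" "continuous_on X h"
    and \<beta>: "\<And>i. 0 < \<beta> i" "\<And>i. 2 * L \<le> \<beta> i"
    and x: "x 0 = x0" "\<And>k. x (Suc k) = Prox h (\<beta> k) (dg (x k) + \<zeta> (Suc k)) (x k)"
    and "z \<in> X"
  shows "(\<Sum>i=1..N. inverse (\<beta> (i - 1)) * (g (x i) + h (x i) - (g z + h z)))
           \<le> V x0 z - V (x N) z
              + (\<Sum>i=1..N. (\<zeta> i \<bullet> (z - x (i - 1))) / \<beta> (i - 1) + (dual_norm nrm (\<zeta> i))\<^sup>2 / (\<beta> (i - 1))\<^sup>2)"
proof -
  have x_in: "x k \<in> X" for k by (rule smd_iterates_in_X[OF h \<beta>(1) x])
  have "(\<Sum>i=1..N. inverse (\<beta> (i - 1)) * (g (x i) + h (x i) - (g z + h z)))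
      \<le> (\<Sum>i=1..N. (V (x (i - 1)) z - V (x i) z)
            + ((\<zeta> i \<bullet> (z - x (i - 1))) / \<beta> (i - 1) + (dual_norm nrm (\<zeta> i))\<^sup>2 / (\<beta> (i - 1))\<^sup>2))"
  proof (rule sum_mono)
    fix i assume "i \<in> {1..N}"
    then obtain k where "i = Suc k" by (cases i) auto
    then show "inverse (\<beta> (i - 1)) * (g (x i) + h (x i) - (g z + h z))
        \<le> (V (x (i - 1)) z - V (x i) z)
            + ((\<zeta> i \<bullet> (z - x (i - 1))) / \<beta> (i - 1) + (dual_norm nrm (\<zeta> i))\<^sup>2 / (\<beta> (i - 1))\<^sup>2)"
      using smd_step_bound[OF g h \<beta>(1,2) x_in \<open>z \<in> X\<close> x(2)] by (simp add: add.assoc)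
  qed
  also have "\<dots> = V x0 z - V (x N) z
      + (\<Sum>i=1..N. (\<zeta> i \<bullet> (z - x (i - 1))) / \<beta> (i - 1) + (dual_norm nrm (\<zeta> i))\<^sup>2 / (\<beta> (i - 1))\<^sup>2)"
    using sum_telescope_atLeast1[of "\<lambda>i. V (x i) z" N] x(1) by (simp add: sum.distrib)
  finally show ?thesis .
qed

lemma ghost_regret_bound:
  assumes "\<And>i. 0 < \<beta> i" "z \<in> X"
  shows "(\<Sum>i=1..N. (\<zeta> i \<bullet> (z - ghost_iter X vt dvt x0 \<beta> \<zeta> (i - 1))) / \<beta> (i - 1))
           \<le> V x0 z - V (ghost_iter X vt dvt x0 \<beta> \<zeta> N) z
              + (\<Sum>i=1..N. (dual_norm nrm (\<zeta> i))\<^sup>2 / (2 * (\<beta> (i - 1))\<^sup>2))"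
proof -
  let ?z = "ghost_iter X vt dvt x0 \<beta> \<zeta>"
  have "(\<Sum>i=1..N. (\<zeta> i \<bullet> (z - ?z (i - 1))) / \<beta> (i - 1))
      \<le> (\<Sum>i=1..N. (V (?z (i - 1)) z - V (?z i) z) + (dual_norm nrm (\<zeta> i))\<^sup>2 / (2 * (\<beta> (i - 1))\<^sup>2))"
  proof (rule sum_mono)
    fix i assume "i \<in> {1..N}"
    then obtain k where "i = Suc k" by (cases i) auto
    then show "(\<zeta> i \<bullet> (z - ?z (i - 1))) / \<beta> (i - 1)
        \<le> (V (?z (i - 1)) z - V (?z i) z) + (dual_norm nrm (\<zeta> i))\<^sup>2 / (2 * (\<beta> (i - 1))\<^sup>2)"
      using ghost_step_bound[OF assms(1,2)] by simp
  qed
  also have "\<dots> = V x0 z - V (?z N) z + (\<Sum>i=1..N. (dual_norm nrm (\<zeta> i))\<^sup>2 / (2 * (\<beta> (i - 1))\<^sup>2))"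
    using sum_telescope_atLeast1[of "\<lambda>i. V (?z i) z" N] by (simp add: sum.distrib)
  finally show ?thesis .
qed

lemma ghost_splitting_bound:
  assumes "\<And>i. 0 < \<beta> i" "z \<in> X"
  shows "V x0 z - V y z
           + (\<Sum>i=1..N. (\<zeta> i \<bullet> (z - x (i - 1))) / \<beta> (i - 1) + (dual_norm nrm (\<zeta> i))\<^sup>2 / (\<beta> (i - 1))\<^sup>2)
         \<le> 2 * V x0 z
           + (\<Sum>i=1..N. (\<zeta> i \<bullet> (ghost_iter X vt dvt x0 \<beta> \<zeta> (i - 1) - x (i - 1))) / \<beta> (i - 1)
                         + 3 / 2 * (dual_norm nrm (\<zeta> i))\<^sup>2 / (\<beta> (i - 1))\<^sup>2)"
proof -
  let ?z = "ghost_iter X vt dvt x0 \<beta> \<zeta>"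
  have split: "(\<zeta> i \<bullet> (z - x (i - 1))) / \<beta> (i - 1) + (dual_norm nrm (\<zeta> i))\<^sup>2 / (\<beta> (i - 1))\<^sup>2
      = (\<zeta> i \<bullet> (z - ?z (i - 1))) / \<beta> (i - 1)
        + ((\<zeta> i \<bullet> (?z (i - 1) - x (i - 1))) / \<beta> (i - 1) + 3 / 2 * (dual_norm nrm (\<zeta> i))\<^sup>2 / (\<beta> (i - 1))\<^sup>2)
        - (dual_norm nrm (\<zeta> i))\<^sup>2 / (2 * (\<beta> (i - 1))\<^sup>2)" for i
    using assms(1)[of "i - 1"] by (simp add: inner_diff_right field_simps)
  show ?thesis
    using ghost_regret_bound[where \<beta> = \<beta> and \<zeta> = \<zeta> and N = N, OF assms]
      Vdiv_nonneg[of x0 y z] Vdiv_nonneg[of x0 "?z N" z]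
    unfolding split sum.distrib sum_subtractf by linarith
qed

end

theorem proposition5:
  fixes X :: "'a::euclidean_space set"
    and nrm :: "'a \<Rightarrow> real"
    and M :: "'w measure"
    and G :: "'a \<Rightarrow> 'w \<Rightarrow> real" and dG :: "'a \<Rightarrow> 'w \<Rightarrow> 'a"
    and g :: "'a \<Rightarrow> real" and dg :: "'a \<Rightarrow> 'a"
    and L :: real
    and vt :: "'a \<Rightarrow> real" and dvt :: "'a \<Rightarrow> 'a"
    and h :: "'a \<Rightarrow> real"
    and x0 :: 'a and \<beta> :: "nat \<Rightarrow> real" and N :: nat
  assumes norm: "is_norm nrm"
    and X: "convex X" "closed X" "interior X \<noteq> {}"
    and M: "prob_space M"
    and G_diff: "\<And>x w. x \<in> X \<Longrightarrow> w \<in> space M \<Longrightarrow>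
                   ((\<lambda>y. G y w) has_derivative (\<lambda>v. dG x w \<bullet> v)) (at x within X)"
    and G_int: "\<And>x. x \<in> X \<Longrightarrow> integrable M (G x)"
    and g_def: "\<And>x. x \<in> X \<Longrightarrow> g x = (\<integral>w. G x w \<partial>M)"
    and g_convex: "convex_on X g"
    and g_diff: "\<And>x. x \<in> X \<Longrightarrow> (g has_derivative (\<lambda>v. dg x \<bullet> v)) (at x within X)"
    and g_lip: "\<And>x x'. x \<in> X \<Longrightarrow> x' \<in> X \<Longrightarrow> dual_norm nrm (dg x - dg x') \<le> L * nrm (x - x')"
    and vt_diff: "\<And>x. (vt has_derivative (\<lambda>v. dvt x \<bullet> v)) (at x)"
    and vt_C1: "continuous_on UNIV dvt"
    and vt_convex: "convex_on UNIV vt"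
    and vt_strong: "\<And>x x'. (dvt x - dvt x') \<bullet> (x - x') \<ge> (nrm (x - x'))\<^sup>2"
    and vt_min: "\<And>x. vt x \<ge> vt 0" "vt 0 = 0"
    and h_convex: "convex_on X h" and h_cont: "continuous_on X h"
    and x0: "x0 \<in> X"
    and \<beta>_pos: "\<And>i. \<beta> i > 0"
    and \<beta>_ge: "\<And>i. \<beta> i \<ge> 2 * L"
    and N: "N \<ge> 1"
  shows "\<exists>Z :: nat \<Rightarrow> (nat \<Rightarrow> 'a) \<Rightarrow> 'a.
           (\<forall>\<zeta>. Z 0 \<zeta> = x0)
         \<and> (\<forall>i<N. \<forall>\<zeta>. Z i \<zeta> \<in> X)
         \<and> (\<forall>i. \<forall>\<zeta>. Z i \<zeta> = Z i (restrict \<zeta> {1..i}))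
         \<and> (\<forall>i. Z i \<in> borel_measurable (PiM {1..i} (\<lambda>_. borel)))
         \<and> (\<forall>\<omega> :: nat \<Rightarrow> 'w. (\<forall>i. \<omega> i \<in> space M) \<longrightarrow>
             (let x = smd_iter X h vt dvt x0 \<beta> dG \<omega>;
                  \<zeta> = (\<lambda>i. dG (x (i - 1)) (\<omega> i) - dg (x (i - 1)));
                  f = (\<lambda>y. g y + h y);
                  V = Vdiv vt dvt x0;
                  S = (\<Sum>i=1..N. inverse (\<beta> (i - 1)));
                  xhat = inverse S *\<^sub>R (\<Sum>i=1..N. inverse (\<beta> (i - 1)) *\<^sub>R x i)
              in \<forall>z\<in>X.
                 S * (f xhat - f z) \<le> (\<Sum>i=1..N. inverse (\<beta> (i - 1)) * (f (x i) - f z))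
               \<and> (\<Sum>i=1..N. inverse (\<beta> (i - 1)) * (f (x i) - f z))
                   \<le> V x0 z - V (x N) z
                      + (\<Sum>i=1..N. (\<zeta> i \<bullet> (z - x (i - 1))) / \<beta> (i - 1)
                                   + (dual_norm nrm (\<zeta> i))\<^sup>2 / (\<beta> (i - 1))\<^sup>2)
               \<and> V x0 z - V (x N) z
                      + (\<Sum>i=1..N. (\<zeta> i \<bullet> (z - x (i - 1))) / \<beta> (i - 1)
                                   + (dual_norm nrm (\<zeta> i))\<^sup>2 / (\<beta> (i - 1))\<^sup>2)
                   \<le> 2 * V x0 z
                      + (\<Sum>i=1..N. (\<zeta> i \<bullet> (Z (i - 1) \<zeta> - x (i - 1))) / \<beta> (i - 1)
                                   + 3 / 2 * (dual_norm nrm (\<zeta> i))\<^sup>2 / (\<beta> (i - 1))\<^sup>2)))"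
proof -
  interpret prox_setup nrm vt dvt X x0
    by unfold_locales (use norm vt_diff vt_strong X x0 in auto)
  let ?x = "\<lambda>\<omega>. smd_iter X h vt dvt x0 \<beta> dG \<omega>"
  let ?\<zeta> = "\<lambda>\<omega> i. dG (?x \<omega> (i - 1)) (\<omega> i) - dg (?x \<omega> (i - 1))"
  have f_convex: "convex_on X (\<lambda>y. g y + h y)" using g_convex h_convex by (rule convex_on_add)
  have x_Suc: "?x \<omega> (Suc k) = Prox h (\<beta> k) (dg (?x \<omega> k) + ?\<zeta> \<omega> (Suc k)) (?x \<omega> k)" for \<omega> k
    by simp
  have x_in: "?x \<omega> k \<in> X" for \<omega> k
    by (rule smd_iterates_in_X[where x = "?x \<omega>", OF h_convex h_cont \<beta>_pos _ x_Suc]) simp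
  show ?thesis
    unfolding Let_def
    apply (intro exI[of _ "\<lambda>i \<zeta>. ghost_iter X vt dvt x0 \<beta> \<zeta> i"] conjI allI impI ballI)
    subgoal by simp
    subgoal by (rule ghost_iter_in_X)
    subgoal by (rule ghost_iter_restrict)
    subgoal using ghost_iter_measurable[OF vt_C1] by blast
    subgoal for \<omega> z
      using convex_on_weighted_mean_gap[OF f_convex, of "{1..N}" "\<lambda>i. inverse (\<beta> (i - 1))" "?x \<omega>" z]
        N \<beta>_pos x_in by simp
    subgoal for \<omega> z
      by (rule smd_regret_bound[where x = "?x \<omega>",
            OF g_convex g_diff g_lip h_convex h_cont \<beta>_pos \<beta>_ge _ x_Suc]) simp_all
    subgoal for \<omega> z
      by (rule ghost_splitting_bound[OF \<beta>_pos])
    done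
qed

end
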